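(* Let $n$ be a positive integer and let $(D;H)$ be a based diagram of $(K_n;H)$ with $H=v_1v_2\cdots v_nv_1$. If $M(D;H)=M_n$, then $\varepsilon(D;H)=Z(n)$.
   Context: $K_n$ is the complete graph with vertices $v_1,\dots,v_n$. A based diagram $(D;H)$ of $(K_n;H)$ is a diagram of $K_n$ on $S^2$ in which $H$ is drawn on the equator and every other edge diagram lies (apart from its endpoints) in the Northern or Southern Hemisphere; $e_{(i,j)}$ denotes the edge diagram joining $v_i,v_j$. Let $A$ be the boundary of a small regular neighbourhood of $H$. For edge diagrams $e,f$ not in $H$, $\varepsilon_H(e,f)=1$ if $e,f$ lie in the same hemisphere and their endpoints on $A$ alternate along $A$, and $0$ otherwise; $\varepsilon(D;H)$ is the sum of $\varepsilon_H(e,f)$ over all unordered pairs of distinct edge diagrams not in $H$. The matrix $M(D;H)=(a_{(i,j)})$ has $a_{(i,j)}=0$ if $j\le i+1$ or $(i,j)=(1,n)$, and otherwise $a_{(i,j)}=1$ (resp. $-1$) if $e_{(i,j)}$ is in the Northern (resp. Southern) Hemisphere. $Z(n)=\frac14\lfloor \frac n2\rfloor\lfloor\frac{n-1}2\rfloor\lfloor\frac{n-2}2\rfloor\lfloor\frac{n-3}2\rfloor$. The $n\times n$ matrix $M_n=(a_{(i,j)})$ is defined as follows. If $n$ is even: $a_{(i,j)}=0$ if $j\le i+1$ or $(i,j)=(1,n)$; otherwise $a_{(i,j)}=1$ if ($j\ge i+2$ and $\frac{n+2}{2}-i\le j\le n-i$) or ($j\ge i+2$ and $j\ge \frac{3n+2}{2}-i$);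 and $a_{(i,j)}=-1$ in all other cases. If $n$ is odd: $a_{(i,j)}=0$ if $j\le i+1$ or $(i,j)=(1,n)$; otherwise $a_{(i,j)}=1$ if ($j\ge i+2$ and $\frac{n+3}{2}-i\le j\le n-i$) or ($j\ge i+2$ and $j\ge\frac{3n+1}{2}-i$); and $a_{(i,j)}=-1$ in all other cases. *)

theory Defs
  imports Main Complex_Main
begin

text \<open>A based diagram (D;H) of (K_n;H), H = v_1 v_2 ... v_n v_1, is recorded by its
  hemisphere assignment: N i j = True iff the edge diagram e_(i,j) (i < j) lies in the
  Northern Hemisphere, False iff it lies in the Southern Hemisphere.
  Only the values for edges not in H are relevant.\<close>

definition notH :: "nat \<Rightarrow> nat \<Rightarrow> nat \<Rightarrow> bool" where
  "notH n i j \<longleftrightarrow> 1 \<le> i \<and> i + 2 \<le> j \<and> j \<le> n \<and> \<not> (i = 1 \<and> j = n)"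

definition alternate :: "nat \<Rightarrow> nat \<Rightarrow> nat \<Rightarrow> nat \<Rightarrow> bool" where
  "alternate i j k l \<longleftrightarrow> {i, j} \<inter> {k, l} = {} \<and> ((i < k \<and> k < j) \<noteq> (i < l \<and> l < j))"

text \<open>Each unordered pair {e_(i,j), e_(k,l)}
  is counted once, via the lexicographic order (i,j) < (k,l).\<close>
definition eps :: "nat \<Rightarrow> (nat \<Rightarrow> nat \<Rightarrow> bool) \<Rightarrow> nat" where
  "eps n N = card {((i, j), (k, l)). notH n i j \<and> notH n k l \<and> (i < k \<or> (i = k \<and> j < l))
      \<and> N i j = N k l \<and> alternate i j k l}"

definition Mdiag :: "nat \<Rightarrow> (nat \<Rightarrow> nat \<Rightarrow> bool) \<Rightarrow> nat \<Rightarrow> nat \<Rightarrow> int" where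
  "Mdiag n N i j = (if j \<le> i + 1 \<or> (i = 1 \<and> j = n) then 0 else if N i j then 1 else -1)"

definition Mn :: "nat \<Rightarrow> nat \<Rightarrow> nat \<Rightarrow> int" where
  "Mn n i j = (if j \<le> i + 1 \<or> (i = 1 \<and> j = n) then 0
     else if even n then
       (if (j \<ge> i + 2 \<and> real (n + 2) / 2 - real i \<le> real j \<and> int j \<le> int n - int i)
           \<or> (j \<ge> i + 2 \<and> real j \<ge> real (3 * n + 2) / 2 - real i) then 1 else -1)
     else
       (if (j \<ge> i + 2 \<and> real (n + 3) / 2 - real i \<le> real j \<and> int j \<le> int n - int i)
           \<or> (j \<ge> i + 2 \<and> real j \<ge> real (3 * n + 1) / 2 - real i) then 1 else -1))"

definition Z :: "nat \<Rightarrow> real" where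
  "Z n = (1/4) * of_int (\<lfloor>real n / 2\<rfloor> * \<lfloor>(real n - 1) / 2\<rfloor>
                         * \<lfloor>(real n - 2) / 2\<rfloor> * \<lfloor>(real n - 3) / 2\<rfloor>)"

end

theory Submission
  imports Defs
begin

text \<open>In M_n the hemisphere of e_(i,j) depends only on i + j, and eps(D;H) counts the
  quadruples i < k < j < l whose chords (i,j), (k,l) lie in the same hemisphere. This count
  is invariant under rotating or reflecting the vertex labels and under swapping the
  hemispheres. Deleting vertex 2m+1 from M_(2m+1) leaves the reflection of M_2m with the
  hemispheres swapped, and deleting vertex 2m+2 from M_(2m+2) leaves M_(2m+1) rotated by m.
  Hence consecutive counts differ by the number of same-hemisphere crossings through the
  last vertex, which split into four ranges counted by binomial coefficients; the
  resulting recursion is solved by Z(n).\<close>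

text \<open>Two chords (i,j), (k,l) of the polygon H have alternating endpoints iff, after
  ordering, i < k < j < l; c assigns the hemisphere to each chord.\<close>
definition crossings :: "nat \<Rightarrow> (nat \<Rightarrow> nat \<Rightarrow> bool) \<Rightarrow> (nat \<times> nat \<times> nat \<times> nat) set" where
  "crossings n c = {(i, k, j, l). 1 \<le> i \<and> i < k \<and> k < j \<and> j < l \<and> l \<le> n \<and> c i j = c k l}"

lemma finite_crossings: "finite (crossings n c)"
  by (rule finite_subset[of _ "{0..n} \<times> {0..n} \<times> {0..n} \<times> {0..n}"]) (auto simp: crossings_def)

lemma crossings_cong:
  assumes "\<And>x y. notH n x y \<Longrightarrow> c x y = c' x y"
  shows "crossings n c = crossings n c'"
proof -
  have "c i j = c k l \<longleftrightarrow> c' i j = c' k l" if "1 \<le> i" "i < k" "k < j" "j < l" "l \<le> n" for i k j l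
    using that assms[of i j] assms[of k l] unfolding notH_def by auto
  then show ?thesis unfolding crossings_def by blast
qed

lemma crossings_Not: "crossings n (\<lambda>x y. \<not> c x y) = crossings n c"
  by (auto simp: crossings_def)

lemma eps_eq_card_crossings: "eps n N = card (crossings n N)"
proof -
  have "bij_betw (\<lambda>(i, k, j, l). ((i, j), (k, l))) (crossings n N)
    {((i, j), (k, l)). notH n i j \<and> notH n k l \<and> (i < k \<or> (i = k \<and> j < l)) \<and> N i j = N k l \<and> alternate i j k l}"
    by (rule bij_betw_byWitness[where f'="\<lambda>((i, j), (k, l)). (i, k, j, l)"])
       (auto simp: crossings_def notH_def alternate_def)
  then show ?thesis unfolding eps_def by (simp add: bij_betw_same_card)
qed

lemma card_crossings_reflect:
  assumes "\<And>x y. c x y = c y x"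
  shows "card (crossings n (\<lambda>x y. c (Suc n - x) (Suc n - y))) = card (crossings n c)"
proof (rule bij_betw_same_card)
  let ?r = "\<lambda>(i, k, j, l). (Suc n - l, Suc n - j, Suc n - k, Suc n - i)"
  show "bij_betw ?r (crossings n (\<lambda>x y. c (Suc n - x) (Suc n - y))) (crossings n c)"
    by (rule bij_betw_byWitness[where f'="?r"]) (auto simp: crossings_def assms)
qed

definition rotate_vertex :: "nat \<Rightarrow> nat \<Rightarrow> nat" where
  "rotate_vertex n x = (if x < n then Suc x else 1)"

lemma card_crossings_rotate:
  assumes "\<And>x y. c x y = c y x"
  shows "card (crossings n (\<lambda>x y. c (rotate_vertex n x) (rotate_vertex n y))) = card (crossings n c)"
proof (rule bij_betw_same_card)
  let ?f = "\<lambda>(i, k, j, l). if l < n then (Suc i, Suc k, Suc j, Suc l) else (1, Suc i, Suc k, Suc j)"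
  let ?g = "\<lambda>(a, b, c, d). if 1 < a then (a - 1, b - 1, c - 1, d - 1) else (b - 1, c - 1, d - 1, n)"
  show "bij_betw ?f (crossings n (\<lambda>x y. c (rotate_vertex n x) (rotate_vertex n y))) (crossings n c)"
    by (rule bij_betw_byWitness[where f'="?g"])
       (auto simp: crossings_def rotate_vertex_def assms split: if_splits)
qed

lemma card_crossings_rotate_funpow:
  assumes "\<And>x y. c x y = c y x"
  shows "card (crossings n (\<lambda>x y. c ((rotate_vertex n ^^ r) x) ((rotate_vertex n ^^ r) y)))
    = card (crossings n c)"
proof (induction r)
  case (Suc r)
  have "card (crossings n (\<lambda>x y. c ((rotate_vertex n ^^ Suc r) x) ((rotate_vertex n ^^ Suc r) y)))
      = card (crossings n (\<lambda>x y. c ((rotate_vertex n ^^ r) x) ((rotate_vertex n ^^ r) y)))"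
    unfolding funpow_Suc_right comp_def
    by (rule card_crossings_rotate[where c="\<lambda>x y. c ((rotate_vertex n ^^ r) x) ((rotate_vertex n ^^ r) y)"])
       (rule assms)
  with Suc show ?case by simp
qed simp

lemma funpow_rotate_vertex:
  assumes "1 \<le> x" "x \<le> n" "r \<le> n"
  shows "(rotate_vertex n ^^ r) x = (if x + r \<le> n then x + r else x + r - n)"
  using assms(3)
proof (induction r)
  case (Suc r)
  then show ?case using assms(1,2) by (auto simp: rotate_vertex_def)
qed (use assms in simp)

definition crossings_at_last :: "nat \<Rightarrow> (nat \<Rightarrow> nat \<Rightarrow> bool) \<Rightarrow> (nat \<times> nat \<times> nat) set" where
  "crossings_at_last n c = {(i, k, j). 1 \<le> i \<and> i < k \<and> k < j \<and> j < n \<and> c i j = c k n}"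

lemma card_crossings_Suc:
  "card (crossings (Suc n) c) = card (crossings n c) + card (crossings_at_last (Suc n) c)"
proof -
  let ?last = "(\<lambda>(i, k, j). (i, k, j, Suc n)) ` crossings_at_last (Suc n) c"
  have "crossings (Suc n) c = crossings n c \<union> ?last"
    by (auto simp: crossings_def crossings_at_last_def image_iff le_Suc_eq)
  moreover have "crossings n c \<inter> ?last = {}"
    by (auto simp: crossings_def)
  moreover have "card ?last = card (crossings_at_last (Suc n) c)"
    by (rule card_image) (auto simp: inj_on_def)
  moreover have "finite ?last"
    by (rule finite_subset[OF _ finite_crossings[of "Suc n" c]]) (auto simp: crossings_def crossings_at_last_def)
  ultimately show ?thesis by (simp add: card_Un_disjoint finite_crossings)
qed

definition incr_pairs :: "nat \<Rightarrow> (nat \<times> nat) set" where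
  "incr_pairs n = {(a, b). 1 \<le> a \<and> a < b \<and> b \<le> n}"

definition incr_triples :: "nat \<Rightarrow> (nat \<times> nat \<times> nat) set" where
  "incr_triples n = {(a, b, c). 1 \<le> a \<and> a < b \<and> b < c \<and> c \<le> n}"

definition triples_sum_le :: "nat \<Rightarrow> (nat \<times> nat \<times> nat) set" where
  "triples_sum_le s = {(i, k, j). 1 \<le> i \<and> i < k \<and> k < j \<and> i + j \<le> s}"

lemma finite_incr_pairs: "finite (incr_pairs n)"
  by (rule finite_subset[of _ "{0..n} \<times> {0..n}"]) (auto simp: incr_pairs_def)

lemma finite_incr_triples: "finite (incr_triples n)"
  by (rule finite_subset[of _ "{0..n} \<times> {0..n} \<times> {0..n}"]) (auto simp: incr_triples_def)

lemma card_incr_pairs: "card (incr_pairs n) = n choose 2"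
proof (induction n)
  case 0
  have "incr_pairs 0 = {}" by (auto simp: incr_pairs_def)
  then show ?case by simp
next
  case (Suc n)
  have "incr_pairs (Suc n) = incr_pairs n \<union> (\<lambda>a. (a, Suc n)) ` {1..n}"
    by (auto simp: incr_pairs_def)
  moreover have "incr_pairs n \<inter> (\<lambda>a. (a, Suc n)) ` {1..n} = {}"
    by (auto simp: incr_pairs_def)
  moreover have "card ((\<lambda>a. (a, Suc n)) ` {1..n}) = n"
    by (subst card_image) (auto simp: inj_on_def)
  ultimately show ?case
    using Suc finite_incr_pairs by (simp add: card_Un_disjoint choose_reduce_nat)
qed

lemma card_incr_triples: "card (incr_triples n) = n choose 3"
proof (induction n)
  case 0
  have "incr_triples 0 = {}" by (auto simp: incr_triples_def)
  then show ?case by simp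
next
  case (Suc n)
  let ?last = "(\<lambda>(a, b). (a, b, Suc n)) ` incr_pairs n"
  have "incr_triples (Suc n) = incr_triples n \<union> ?last"
    by (auto simp: incr_triples_def incr_pairs_def image_iff le_Suc_eq)
  moreover have "incr_triples n \<inter> ?last = {}"
    by (auto simp: incr_triples_def)
  moreover have "card ?last = n choose 2"
    by (subst card_image) (auto simp: inj_on_def card_incr_pairs)
  ultimately show ?case
    using Suc finite_incr_triples finite_incr_pairs
    by (simp add: card_Un_disjoint choose_reduce_nat numeral_eq_Suc)
qed

lemma card_triples_sum_le:
  "card (triples_sum_le s) + card (triples_sum_le (Suc s)) = s choose 3"
proof -
  let ?low = "{(i, k, j). 1 \<le> i \<and> i < k \<and> k < j \<and> j \<le> s \<and> i + j \<le> Suc s}"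
  let ?high = "{(i, k, j). 1 \<le> i \<and> i < k \<and> k < j \<and> j \<le> s \<and> Suc (Suc s) \<le> i + j}"
  have "incr_triples s = ?low \<union> ?high"
    by (auto simp: incr_triples_def)
  moreover have "?low \<inter> ?high = {}"
    by auto
  moreover have "finite ?low" "finite ?high"
    by (rule finite_subset[OF _ finite_incr_triples[of s]]; auto simp: incr_triples_def)+
  moreover have "?low = triples_sum_le (Suc s)"
    by (auto simp: triples_sum_le_def)
  moreover have "card ?high = card (triples_sum_le s)"
    by (rule bij_betw_same_card, rule bij_betw_byWitness
        [where f="\<lambda>(i, k, j). (Suc s - j, Suc s - k, Suc s - i)" and f'="\<lambda>(i, k, j). (Suc s - j, Suc s - k, Suc s - i)"])
       (auto simp: triples_sum_le_def)
  ultimately show ?thesis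
    using card_incr_triples[of s] by (simp add: card_Un_disjoint)
qed

text \<open>The entry of M_n at (i,j) is 1 exactly when north n (i + j).\<close>
definition north :: "nat \<Rightarrow> nat \<Rightarrow> bool" where
  "north n s \<longleftrightarrow> (if even n then (n div 2 + 1 \<le> s \<and> s \<le> n) \<or> 3 * (n div 2) + 1 \<le> s
                   else (n div 2 + 2 \<le> s \<and> s \<le> n) \<or> 3 * (n div 2) + 2 \<le> s)"

lemma north_even: "north (2 * m) s \<longleftrightarrow> (m + 1 \<le> s \<and> s \<le> 2 * m) \<or> 3 * m + 1 \<le> s"
  by (simp add: north_def)

lemma north_odd: "north (2 * m + 1) s \<longleftrightarrow> (m + 2 \<le> s \<and> s \<le> 2 * m + 1) \<or> 3 * m + 2 \<le> s"
  by (simp add: north_def)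

lemma Mn_eq_north:
  assumes "notH n i j"
  shows "Mn n i j = (if north n (i + j) then 1 else -1)"
proof (cases "even n")
  case True
  then obtain m where n: "n = 2 * m" by auto
  have "(j \<ge> i + 2 \<and> real (n + 2) / 2 - real i \<le> real j \<and> int j \<le> int n - int i)
      \<or> (j \<ge> i + 2 \<and> real j \<ge> real (3 * n + 2) / 2 - real i) \<longleftrightarrow> north n (i + j)"
    using assms unfolding n north_even notH_def by (auto simp: field_simps)
  with assms True show ?thesis unfolding Mn_def notH_def by auto
next
  case False
  then obtain m where n: "n = 2 * m + 1" using oddE by blast
  have "(j \<ge> i + 2 \<and> real (n + 3) / 2 - real i \<le> real j \<and> int j \<le> int n - int i)
      \<or> (j \<ge> i + 2 \<and> real j \<ge> real (3 * n + 1) / 2 - real i) \<longleftrightarrow> north n (i + j)"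
    using assms unfolding n north_odd notH_def by (auto simp: field_simps)
  with assms False show ?thesis unfolding Mn_def notH_def by auto
qed

lemma north_reflect:
  assumes "3 \<le> s" "s + 1 \<le> 4 * m"
  shows "north (2 * m) (4 * m + 2 - s) \<longleftrightarrow> \<not> north (2 * m + 1) s"
  using assms unfolding north_even north_odd by auto

lemma north_rotate:
  assumes "1 \<le> x" "x \<le> 2 * m + 1" "1 \<le> y" "y \<le> 2 * m + 1" "x \<noteq> y"
  shows "north (2 * m + 1) ((rotate_vertex (2 * m + 1) ^^ m) x + (rotate_vertex (2 * m + 1) ^^ m) y)
    \<longleftrightarrow> north (2 * m + 2) (x + y)"
proof -
  have r: "(rotate_vertex (2 * m + 1) ^^ m) z = (if z \<le> Suc m then z + m else z - Suc m)"
    if "1 \<le> z" "z \<le> 2 * m + 1" for z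
    using funpow_rotate_vertex[OF that] by auto
  have "north (2 * m + 2) (x + y) \<longleftrightarrow> north (2 * Suc m) (x + y)"
    by simp
  then show ?thesis
    unfolding r[OF assms(1,2)] r[OF assms(3,4)] north_even north_odd using assms by auto
qed

lemma card_crossings_north_odd_step:
  "card (crossings (2 * m + 1) (\<lambda>x y. north (2 * m + 1) (x + y)))
    = card (crossings (2 * m) (\<lambda>x y. north (2 * m) (x + y)))
      + card (crossings_at_last (2 * m + 1) (\<lambda>x y. north (2 * m + 1) (x + y)))"
proof -
  have "crossings (2 * m) (\<lambda>x y. north (2 * m + 1) (x + y))
      = crossings (2 * m) (\<lambda>x y. \<not> north (2 * m) ((Suc (2 * m) - x) + (Suc (2 * m) - y)))"
  proof (rule crossings_cong)
    fix x y assume "notH (2 * m) x y"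
    then have "(Suc (2 * m) - x) + (Suc (2 * m) - y) = 4 * m + 2 - (x + y)" "3 \<le> x + y" "x + y + 1 \<le> 4 * m"
      by (auto simp: notH_def)
    then show "north (2 * m + 1) (x + y) = (\<not> north (2 * m) ((Suc (2 * m) - x) + (Suc (2 * m) - y)))"
      using north_reflect by simp
  qed
  then have "card (crossings (2 * m) (\<lambda>x y. north (2 * m + 1) (x + y)))
      = card (crossings (2 * m) (\<lambda>x y. north (2 * m) (x + y)))"
    using card_crossings_reflect[of "\<lambda>x y. north (2 * m) (x + y)"] by (simp add: crossings_Not add.commute)
  then show ?thesis
    using card_crossings_Suc[of "2 * m"] by simp
qed

lemma card_crossings_north_even_step:
  "card (crossings (2 * m + 2) (\<lambda>x y. north (2 * m + 2) (x + y)))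
    = card (crossings (2 * m + 1) (\<lambda>x y. north (2 * m + 1) (x + y)))
      + card (crossings_at_last (2 * m + 2) (\<lambda>x y. north (2 * m + 2) (x + y)))"
proof -
  let ?r = "rotate_vertex (2 * m + 1) ^^ m"
  have "crossings (2 * m + 1) (\<lambda>x y. north (2 * m + 2) (x + y))
      = crossings (2 * m + 1) (\<lambda>x y. north (2 * m + 1) (?r x + ?r y))"
  proof (rule crossings_cong)
    fix x y assume "notH (2 * m + 1) x y"
    then show "north (2 * m + 2) (x + y) = north (2 * m + 1) (?r x + ?r y)"
      using north_rotate[of x m y] by (auto simp: notH_def)
  qed
  then have "card (crossings (2 * m + 1) (\<lambda>x y. north (2 * m + 2) (x + y)))
      = card (crossings (2 * m + 1) (\<lambda>x y. north (2 * m + 1) (x + y)))"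
    using card_crossings_rotate_funpow[of "\<lambda>x y. north (2 * m + 1) (x + y)"] by (simp add: add.commute)
  then show ?thesis
    using card_crossings_Suc[of "2 * m + 1"] by simp
qed

text \<open>The triples are split by k \<le> m versus k > m (which fixes the hemisphere of the chord
  (k, n)) and by the range of i + j; each part is an affine relabelling of incr_triples or of
  triples_sum_le.\<close>
lemma card_crossings_at_last_odd:
  "card (crossings_at_last (2 * m + 1) (\<lambda>x y. north (2 * m + 1) (x + y)))
    = (Suc m choose 3) + 2 * (m choose 3)"
proof -
  define L where "L = crossings_at_last (2 * m + 1) (\<lambda>x y. north (2 * m + 1) (x + y))"
  define P1 where "P1 = {(i, k, j). 1 \<le> i \<and> i < k \<and> k < j \<and> j \<le> 2 * m \<and> k \<le> m \<and> i + j \<le> m + 1}"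
  define P2 where "P2 = {(i, k, j). 1 \<le> i \<and> i < k \<and> k < j \<and> j \<le> 2 * m \<and> k \<le> m \<and> 2 * m + 2 \<le> i + j}"
  define P3 where "P3 = {(i, k, j). 1 \<le> i \<and> i < k \<and> k < j \<and> j \<le> 2 * m \<and> m + 1 \<le> k \<and> i + j \<le> 2 * m + 1}"
  define P4 where "P4 = {(i, k, j). 1 \<le> i \<and> i < k \<and> k < j \<and> j \<le> 2 * m \<and> m + 1 \<le> k \<and> 3 * m + 2 \<le> i + j}"
  have fin: "finite L"
    by (rule finite_subset[of _ "{0..2 * m} \<times> {0..2 * m} \<times> {0..2 * m}"]) (auto simp: L_def crossings_at_last_def)
  have L: "L = (P1 \<union> P2) \<union> (P3 \<union> P4)"
    unfolding L_def crossings_at_last_def P1_def P2_def P3_def P4_def north_odd by (auto; linarith)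
  have "card L = card P1 + card P2 + (card P3 + card P4)"
    using fin unfolding L by (subst card_Un_disjoint; auto simp: card_Un_disjoint P1_def P2_def P3_def P4_def)+
  moreover have "P1 = triples_sum_le (m + 1)"
    unfolding P1_def triples_sum_le_def by auto
  moreover have "card P2 = card (incr_triples m)"
    by (rule bij_betw_same_card, rule bij_betw_byWitness
        [where f="\<lambda>(i, k, j). (2 * m + 1 - j, i, k)" and f'="\<lambda>(a, b, c). (b, c, 2 * m + 1 - a)"])
       (auto simp: P2_def incr_triples_def)
  moreover have "card P3 = card (incr_triples (m + 1))"
    by (rule bij_betw_same_card, rule bij_betw_byWitness
        [where f="\<lambda>(i, k, j). (i, 2 * m + 2 - j, 2 * m + 2 - k)" and f'="\<lambda>(a, b, c). (a, 2 * m + 2 - c, 2 * m + 2 - b)"])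
       (auto simp: P3_def incr_triples_def)
  moreover have "card P4 = card (triples_sum_le m)"
    by (rule bij_betw_same_card, rule bij_betw_byWitness
        [where f="\<lambda>(i, k, j). (2 * m + 1 - j, 2 * m + 1 - k, 2 * m + 1 - i)" and f'="\<lambda>(i, k, j). (2 * m + 1 - j, 2 * m + 1 - k, 2 * m + 1 - i)"])
       (auto simp: P4_def triples_sum_le_def)
  ultimately show ?thesis
    using card_triples_sum_le[of m] card_incr_triples unfolding L_def by simp
qed

lemma card_crossings_at_last_even:
  "card (crossings_at_last (2 * m + 2) (\<lambda>x y. north (2 * m + 2) (x + y)))
    = 2 * (Suc m choose 3) + (m choose 3)"
proof -
  define M where "M = Suc m"
  define L where "L = crossings_at_last (2 * M) (\<lambda>x y. north (2 * M) (x + y))"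
  define P1 where "P1 = {(i, k, j). 1 \<le> i \<and> i < k \<and> k < j \<and> j < 2 * M \<and> k \<le> M \<and> i + j \<le> M}"
  define P2 where "P2 = {(i, k, j). 1 \<le> i \<and> i < k \<and> k < j \<and> j < 2 * M \<and> k \<le> M \<and> 2 * M + 1 \<le> i + j}"
  define P3 where "P3 = {(i, k, j). 1 \<le> i \<and> i < k \<and> k < j \<and> j < 2 * M \<and> M + 1 \<le> k \<and> i + j \<le> 2 * M}"
  define P4 where "P4 = {(i, k, j). 1 \<le> i \<and> i < k \<and> k < j \<and> j < 2 * M \<and> M + 1 \<le> k \<and> 3 * M + 1 \<le> i + j}"
  have fin: "finite L"
    by (rule finite_subset[of _ "{0..2 * M} \<times> {0..2 * M} \<times> {0..2 * M}"]) (auto simp: L_def crossings_at_last_def)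
  have L: "L = (P1 \<union> P2) \<union> (P3 \<union> P4)"
    unfolding L_def crossings_at_last_def P1_def P2_def P3_def P4_def north_even by (auto; linarith)
  have "card L = card P1 + card P2 + (card P3 + card P4)"
    using fin unfolding L by (subst card_Un_disjoint; auto simp: card_Un_disjoint P1_def P2_def P3_def P4_def)+
  moreover have "P1 = triples_sum_le M"
    unfolding P1_def triples_sum_le_def by auto
  moreover have "card P2 = card (incr_triples M)"
    by (rule bij_betw_same_card, rule bij_betw_byWitness
        [where f="\<lambda>(i, k, j). (2 * M - j, i, k)" and f'="\<lambda>(a, b, c). (b, c, 2 * M - a)"])
       (auto simp: P2_def incr_triples_def)
  moreover have "card P3 = card (incr_triples M)"
    by (rule bij_betw_same_card, rule bij_betw_byWitness
        [where f="\<lambda>(i, k, j). (i, 2 * M + 1 - j, 2 * M + 1 - k)" and f'="\<lambda>(a, b, c). (a, 2 * M + 1 - c, 2 * M + 1 - b)"])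
       (auto simp: P3_def incr_triples_def)
  moreover have "card P4 = card (triples_sum_le m)"
    by (rule bij_betw_same_card, rule bij_betw_byWitness
        [where f="\<lambda>(i, k, j). (2 * M - j, 2 * M - k, 2 * M - i)" and f'="\<lambda>(i, k, j). (2 * M - j, 2 * M - k, 2 * M - i)"])
       (auto simp: P4_def triples_sum_le_def M_def)
  ultimately show ?thesis
    using card_triples_sum_le[of m] card_incr_triples unfolding L_def M_def by simp
qed

lemma choose_two_real: "2 * real (n choose 2) = real n * (real n - 1)"
proof (induction n)
  case (Suc n)
  have "Suc n choose 2 = n + (n choose 2)"
    by (simp add: numeral_2_eq_2)
  with Suc show ?case by (simp add: algebra_simps)
qed simp

lemma choose_three_real: "6 * real (n choose 3) = real n * (real n - 1) * (real n - 2)"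
proof (induction n)
  case (Suc n)
  have "Suc n choose 3 = (n choose 2) + (n choose 3)"
    by (simp add: numeral_3_eq_3 numeral_2_eq_2)
  with Suc choose_two_real[of n] show ?case by (simp add: algebra_simps)
qed simp

lemma card_crossings_north:
  "4 * real (card (crossings (2 * m) (\<lambda>x y. north (2 * m) (x + y))))
      = real m * (real m - 1)^2 * (real m - 2)
   \<and> 4 * real (card (crossings (2 * m + 1) (\<lambda>x y. north (2 * m + 1) (x + y))))
      = (real m)^2 * (real m - 1)^2"
proof (induction m)
  case 0
  have "crossings (2 * 0) c = {}" "crossings (2 * 0 + 1) c = {}" for c
    by (auto simp: crossings_def)
  then show ?case by simp
next
  case (Suc m)
  have even: "4 * real (card (crossings (2 * Suc m) (\<lambda>x y. north (2 * Suc m) (x + y))))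
      = real (Suc m) * (real (Suc m) - 1)^2 * (real (Suc m) - 2)"
    using Suc.IH card_crossings_north_even_step[of m] card_crossings_at_last_even[of m]
      choose_three_real[of m] choose_three_real[of "Suc m"]
    by (simp add: algebra_simps power2_eq_square)
  have "4 * real (card (crossings (2 * Suc m + 1) (\<lambda>x y. north (2 * Suc m + 1) (x + y))))
      = (real (Suc m))^2 * (real (Suc m) - 1)^2"
    using even card_crossings_north_odd_step[of "Suc m"] card_crossings_at_last_odd[of "Suc m"]
      choose_three_real[of "Suc m"] choose_three_real[of "Suc (Suc m)"]
    by (simp add: algebra_simps power2_eq_square)
  with even show ?case by simp
qed

lemma Z_even: "Z (2 * m) = real m * (real m - 1)^2 * (real m - 2) / 4"
proof -
  have "\<lfloor>(real (2 * m) - 1) / 2\<rfloor> = int m - 1" "\<lfloor>(real (2 * m) - 2) / 2\<rfloor> = int m - 1"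
    "\<lfloor>(real (2 * m) - 3) / 2\<rfloor> = int m - 2"
    by (intro floor_unique; simp add: field_simps)+
  then show ?thesis unfolding Z_def by (simp add: power2_eq_square)
qed

lemma Z_odd: "Z (2 * m + 1) = (real m)^2 * (real m - 1)^2 / 4"
proof -
  have "\<lfloor>real (2 * m + 1) / 2\<rfloor> = int m" "\<lfloor>(real (2 * m + 1) - 1) / 2\<rfloor> = int m"
    "\<lfloor>(real (2 * m + 1) - 2) / 2\<rfloor> = int m - 1" "\<lfloor>(real (2 * m + 1) - 3) / 2\<rfloor> = int m - 1"
    by (intro floor_unique; simp add: field_simps)+
  then show ?thesis unfolding Z_def by (simp add: power2_eq_square)
qed

lemma card_crossings_north_eq_Z: "real (card (crossings n (\<lambda>x y. north n (x + y)))) = Z n"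
proof (cases "even n")
  case True
  then obtain m where "n = 2 * m" by auto
  then show ?thesis using card_crossings_north[of m] Z_even[of m] by simp
next
  case False
  then obtain m where "n = 2 * m + 1" using oddE by blast
  then show ?thesis using card_crossings_north[of m] Z_odd[of m] by simp
qed

theorem lemma2p3:
  fixes n :: nat and N :: "nat \<Rightarrow> nat \<Rightarrow> bool"
  assumes "n \<ge> 1"
    and "\<forall>i \<in> {1..n}. \<forall>j \<in> {1..n}. Mdiag n N i j = Mn n i j"
  shows "real (eps n N) = Z n"
proof -
  have "N i j = north n (i + j)" if "notH n i j" for i j
  proof -
    have "Mdiag n N i j = Mn n i j"
      using that assms(2) by (auto simp: notH_def)
    then show ?thesis
      using that Mn_eq_north[OF that] by (auto simp: Mdiag_def notH_def split: if_splits)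
  qed
  then have "crossings n N = crossings n (\<lambda>x y. north n (x + y))"
    by (rule crossings_cong)
  then show ?thesis
    by (simp add: eps_eq_card_crossings card_crossings_north_eq_Z)
qed

end
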